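(* Consider the 2-node network game with $\pi^M=W_{soc}$, $a_1=a_2=a>0$, $c_1=c_2=c>0$, $b_1,b_2>0$ with $1<b_1/b_2\le 3$, and $f_{12}=\infty$. Then the GNE is unique and is given by $$r^*=\frac{ac(b_2-b_1)}{(b_1+b_2)(b_1b_2+2c^2)+c(b_1^2+b_2^2+4b_1b_2)},\qquad q_1^*=\frac{a-b_1r^*}{2(b_1+c)},\qquad q_2^*=\frac{a+b_2r^*}{2(b_2+c)}.$$ At this GNE, $a-b_1r^*\ge 0$, $a+b_2r^*\ge0$, and $r^*=\frac{b_2q_2^*-b_1q_1^*}{b_1+b_2}$.
   Context: 2-node network game. There are generators $G_1,G_2$. Generator $k$ chooses $q_k\ge 0$ and has profit $\pi^G_k=q_kp_k(q_k+r_k)-c_kq_k^2$, where $p_k(d)=a_k-b_kd$. The market maker chooses $r\in\mathbb{R}$ and sets $r_1=r$, $r_2=-r$, subject to $-q_1\le r\le q_2$ (there is no line limit). Social welfare objective. The market maker maximizes $$W_{soc}(q,r)=\sum_k\Big(\int_0^{q_k+r_k}p_k(w)dw-c_kq_k^2\Big).$$ GNE. A triple $(q_1^*,q_2^*,r^* )$ with $r^*$ feasible given $q^*$ is a GNE if both of the following hold: - each $q_k^*$ maximizes $\pi^G_k$ over $q_k\ge0$, given the other generator's quantity and $r^*$; - $r^*$ maximizes $W_{soc}(q^*,\cdot)$ over the feasible set determined by $q^*$. *)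

theory Defs
  imports "HOL-Analysis.Analysis"
begin

text \<open>Two-node network game. Generator k has inverse demand p_k(d) = a_k - b_k d,
  cost c_k q^2. The market maker chooses r, with r_1 = r, r_2 = -r,
  feasible iff -q_1 \<le> r \<le> q_2.\<close>

definition price :: "real \<Rightarrow> real \<Rightarrow> real \<Rightarrow> real" where
  "price a b d = a - b * d"

definition gen_profit :: "real \<Rightarrow> real \<Rightarrow> real \<Rightarrow> real \<Rightarrow> real \<Rightarrow> real" where
  "gen_profit a b c q rk = q * price a b (q + rk) - c * q^2"

text \<open>Social welfare  sum_k (int_0^{q_k + r_k} p_k(w) dw - c_k q_k^2).
  On the feasible set q_k + r_k \<ge> 0, so the integral over {0..q_k+r_k} is the usual one.\<close>
definition W_soc :: "real \<Rightarrow> real \<Rightarrow> real \<Rightarrow> real \<Rightarrow> real \<Rightarrow> real \<Rightarrow>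
    real \<Rightarrow> real \<Rightarrow> real \<Rightarrow> real" where
  "W_soc a1 b1 c1 a2 b2 c2 q1 q2 r =
     (integral {0..q1 + r} (\<lambda>w. price a1 b1 w) - c1 * q1^2)
   + (integral {0..q2 + (- r)} (\<lambda>w. price a2 b2 w) - c2 * q2^2)"

definition feasible_r :: "real \<Rightarrow> real \<Rightarrow> real \<Rightarrow> bool" where
  "feasible_r q1 q2 r \<longleftrightarrow> - q1 \<le> r \<and> r \<le> q2"

definition is_GNE :: "real \<Rightarrow> real \<Rightarrow> real \<Rightarrow> real \<Rightarrow> real \<Rightarrow> real \<Rightarrow>
    real \<Rightarrow> real \<Rightarrow> real \<Rightarrow> bool" where
  "is_GNE a1 b1 c1 a2 b2 c2 q1 q2 r \<longleftrightarrow>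
     q1 \<ge> 0 \<and> q2 \<ge> 0 \<and> feasible_r q1 q2 r \<and>
     (\<forall>q \<ge> 0. gen_profit a1 b1 c1 q r \<le> gen_profit a1 b1 c1 q1 r) \<and>
     (\<forall>q \<ge> 0. gen_profit a2 b2 c2 q (- r) \<le> gen_profit a2 b2 c2 q2 (- r)) \<and>
     (\<forall>r'. feasible_r q1 q2 r' \<longrightarrow>
        W_soc a1 b1 c1 a2 b2 c2 q1 q2 r' \<le> W_soc a1 b1 c1 a2 b2 c2 q1 q2 r)"

end

theory Submission
  imports Defs
begin

(* Both players' problems are concave quadratics, so each best response
   is characterised by completing the square:
   - generator k maximises q (A - B r_k) - (B + C) q^2 over q \<ge> 0, hence its best
     response is 2 (B + C) q = max 0 (A - B r_k);
   - on the feasible set W_soc is a concave quadratic in r whose unconstrained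
     maximiser r0, given by (b1 + b2) r0 = b2 q2 - b1 q1, is itself feasible, so the
     market maker's best response is exactly that balance equation.
   This turns a GNE into two "max" equations plus one linear equation.  A short
   argument excludes the corners (a shut-down generator would force the other one
   to over-produce), after which the system is linear with determinant
   2 (b1 + c) (b2 + c) (b1 + b2) and has the unique solution r*. *)

lemma gen_profit_quadratic:
  "gen_profit A B C q rk = q * (A - B * rk) - (B + C) * q^2"
  unfolding gen_profit_def price_def by (simp add: algebra_simps power2_eq_square)

lemma gen_profit_gap:
  assumes "A - B * rk = 2 * (B + C) * q0"
  shows "gen_profit A B C q0 rk - gen_profit A B C q rk = (B + C) * (q - q0)^2"
  unfolding gen_profit_quadratic assms by (simp add: algebra_simps power2_eq_square)

lemma maximiser_iff_of_square_gap:
  fixes f :: "real \<Rightarrow> real"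
  assumes "k > 0" "x0 \<in> S" "x \<in> S"
    and gap: "\<And>y. y \<in> S \<Longrightarrow> f x0 - f y = k * (y - x0)^2"
  shows "(\<forall>y\<in>S. f y \<le> f x) \<longleftrightarrow> x = x0"
proof
  assume "\<forall>y\<in>S. f y \<le> f x"
  then have "k * (x - x0)^2 \<le> 0" using gap[OF assms(3)] assms(2) by force
  then show "x = x0" using assms(1) by (simp add: mult_le_0_iff)
next
  assume "x = x0"
  show "\<forall>y\<in>S. f y \<le> f x"
  proof
    fix y assume "y \<in> S"
    have "k * (y - x0)^2 \<ge> 0" using assms(1) by simp
    then have "f y \<le> f x0" using gap[OF \<open>y \<in> S\<close>] by linarith
    then show "f y \<le> f x" using \<open>x = x0\<close> by simp
  qed
qed

lemma gen_best_response_iff: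
  assumes "B > 0" "C > 0" "q1 \<ge> 0"
  shows "(\<forall>q\<ge>0. gen_profit A B C q rk \<le> gen_profit A B C q1 rk)
     \<longleftrightarrow> 2 * (B + C) * q1 = max 0 (A - B * rk)"
proof (cases "A - B * rk \<ge> 0")
  case True
  define q0 where "q0 = (A - B * rk) / (2 * (B + C))"
  have q0: "A - B * rk = 2 * (B + C) * q0" "q0 \<ge> 0"
    using assms True unfolding q0_def by (simp_all add: field_simps)
  have "(\<forall>q\<in>{0..}. gen_profit A B C q rk \<le> gen_profit A B C q1 rk) \<longleftrightarrow> q1 = q0"
    by (rule maximiser_iff_of_square_gap[where k = "B + C"])
       (use assms q0 gen_profit_gap[OF q0(1)] in auto)
  then show ?thesis using q0(1) True assms by auto
next
  case False
  \<comment> \<open>Selling anything at a non-positive margin loses money, so only q = 0 is optimal.\<close>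
  have nonpos: "gen_profit A B C q rk \<le> - (B + C) * q^2" if "q \<ge> 0" for q
  proof -
    have "q * (A - B * rk) \<le> 0" using False that by (simp add: mult_nonneg_nonpos)
    then show ?thesis unfolding gen_profit_quadratic by linarith
  qed
  have square_nonneg: "(B + C) * q^2 \<ge> 0" for q using assms by simp
  have at_zero: "gen_profit A B C 0 rk = 0" by (simp add: gen_profit_quadratic)
  have "(\<forall>q\<ge>0. gen_profit A B C q rk \<le> gen_profit A B C q1 rk) \<longleftrightarrow> q1 = 0"
  proof
    assume "\<forall>q\<ge>0. gen_profit A B C q rk \<le> gen_profit A B C q1 rk"
    then have "0 \<le> gen_profit A B C q1 rk" using at_zero by (metis order_refl)
    then have "(B + C) * q1^2 \<le> 0" using nonpos[OF assms(3)] by linarith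
    then show "q1 = 0" using assms by (simp add: mult_le_0_iff)
  next
    assume "q1 = 0"
    show "\<forall>q\<ge>0. gen_profit A B C q rk \<le> gen_profit A B C q1 rk"
    proof (intro allI impI)
      fix q :: real assume "q \<ge> 0"
      then have "gen_profit A B C q rk \<le> 0" using nonpos[of q] square_nonneg[of q] by linarith
      then show "gen_profit A B C q rk \<le> gen_profit A B C q1 rk" using at_zero \<open>q1 = 0\<close> by simp
    qed
  qed
  then show ?thesis using False assms by auto
qed

lemma integral_price:
  assumes "x \<ge> 0"
  shows "integral {0..x} (\<lambda>w. price a b w) = a * x - b * x^2 / 2"
proof -
  have "((\<lambda>w. price a b w) has_integral
          ((\<lambda>w. a * w - b * (w * w) / 2) x - (\<lambda>w. a * w - b * (w * w) / 2) 0)) {0..x}"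
    by (rule fundamental_theorem_of_calculus[OF assms])
       (auto intro!: derivative_eq_intros simp: price_def)
  then show ?thesis by (simp add: integral_unique power2_eq_square)
qed

lemma W_soc_feasible:
  assumes "feasible_r q1 q2 r"
  shows "W_soc a b1 c1 a b2 c2 q1 q2 r =
    a * (q1 + r) - b1 * (q1 + r)^2 / 2 - c1 * q1^2 + (a * (q2 - r) - b2 * (q2 - r)^2 / 2) - c2 * q2^2"
  using assms unfolding W_soc_def feasible_r_def by (simp add: integral_price)

text \<open>The balancing flow, i.e. the unconstrained maximiser of welfare, is feasible:
  it sends each node a convex combination of the total production.\<close>
lemma balance_feasible:
  assumes "b1 > 0" "b2 > 0" "q1 \<ge> 0" "q2 \<ge> 0" "(b1 + b2) * r0 = b2 * q2 - b1 * q1"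
  shows "feasible_r q1 q2 r0"
proof -
  have "(b1 + b2) * (q1 + r0) = b2 * (q1 + q2)" "(b1 + b2) * (q2 - r0) = b1 * (q1 + q2)"
    using assms(5) by (simp_all add: algebra_simps)
  then have "q1 + r0 = b2 * (q1 + q2) / (b1 + b2)" "q2 - r0 = b1 * (q1 + q2) / (b1 + b2)"
    using assms(1,2) by (simp_all add: field_simps)
  moreover have "b2 * (q1 + q2) / (b1 + b2) \<ge> 0" "b1 * (q1 + q2) / (b1 + b2) \<ge> 0"
    using assms by simp_all
  ultimately show ?thesis unfolding feasible_r_def by linarith
qed

lemma W_soc_gap:
  assumes "feasible_r q1 q2 r0" "feasible_r q1 q2 r" "(b1 + b2) * r0 = b2 * q2 - b1 * q1"
  shows "W_soc a b1 c1 a b2 c2 q1 q2 r0 - W_soc a b1 c1 a b2 c2 q1 q2 r = (b1 + b2) / 2 * (r - r0)^2"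
proof -
  have "W_soc a b1 c1 a b2 c2 q1 q2 r0 - W_soc a b1 c1 a b2 c2 q1 q2 r - (b1 + b2) / 2 * (r - r0)^2
      = (r - r0) * ((b1 + b2) * r0 - (b2 * q2 - b1 * q1))"
    unfolding W_soc_feasible[OF assms(1)] W_soc_feasible[OF assms(2)]
    by (simp add: field_simps power2_eq_square)
  then show ?thesis using assms(3) by simp
qed

lemma market_maker_best_response_iff:
  assumes "b1 > 0" "b2 > 0" "q1 \<ge> 0" "q2 \<ge> 0" "feasible_r q1 q2 r"
  shows "(\<forall>r'. feasible_r q1 q2 r' \<longrightarrow>
            W_soc a b1 c1 a b2 c2 q1 q2 r' \<le> W_soc a b1 c1 a b2 c2 q1 q2 r)
     \<longleftrightarrow> (b1 + b2) * r = b2 * q2 - b1 * q1"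
proof -
  define r0 where "r0 = (b2 * q2 - b1 * q1) / (b1 + b2)"
  have r0: "(b1 + b2) * r0 = b2 * q2 - b1 * q1"
    using assms unfolding r0_def by (simp add: field_simps)
  have feas0: "feasible_r q1 q2 r0" using balance_feasible[OF assms(1-4) r0] .
  have "(\<forall>r'\<in>{r'. feasible_r q1 q2 r'}.
            W_soc a b1 c1 a b2 c2 q1 q2 r' \<le> W_soc a b1 c1 a b2 c2 q1 q2 r) \<longleftrightarrow> r = r0"
    by (rule maximiser_iff_of_square_gap[where k = "(b1 + b2) / 2"])
       (use assms feas0 W_soc_gap[OF feas0 _ r0] in auto)
  moreover have "r = r0 \<longleftrightarrow> (b1 + b2) * r = b2 * q2 - b1 * q1"
    using assms(1,2) unfolding r0_def by (simp add: eq_divide_eq mult.commute)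
  ultimately show ?thesis by auto
qed

lemma is_GNE_iff:
  assumes "b1 > 0" "b2 > 0" "c > 0"
  shows "is_GNE a b1 c a b2 c q1 q2 r \<longleftrightarrow>
    q1 \<ge> 0 \<and> q2 \<ge> 0 \<and>
    2 * (b1 + c) * q1 = max 0 (a - b1 * r) \<and>
    2 * (b2 + c) * q2 = max 0 (a + b2 * r) \<and>
    (b1 + b2) * r = b2 * q2 - b1 * q1"
proof (cases "q1 \<ge> 0 \<and> q2 \<ge> 0")
  case True
  then have q: "q1 \<ge> 0" "q2 \<ge> 0" by auto
  have market: "feasible_r q1 q2 r \<and>
      (\<forall>r'. feasible_r q1 q2 r' \<longrightarrow> W_soc a b1 c a b2 c q1 q2 r' \<le> W_soc a b1 c a b2 c q1 q2 r)
    \<longleftrightarrow> (b1 + b2) * r = b2 * q2 - b1 * q1"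
    using market_maker_best_response_iff[OF assms(1,2) q] balance_feasible[OF assms(1,2) q]
    by blast
  show ?thesis
    unfolding is_GNE_def gen_best_response_iff[OF assms(1,3) q(1)]
      gen_best_response_iff[OF assms(2,3) q(2)] market[symmetric]
    using q by auto
qed (auto simp: is_GNE_def)

text \<open>No generator shuts down in equilibrium: if node 1 had a - b1 r < 0, its generator
  would produce nothing, so all of node 1's demand would be imported from node 2,
  which forces generator 2 above its own best response.\<close>
lemma no_shutdown:
  fixes a b1 b2 c q1 q2 r :: real
  assumes "a > 0" "b1 > 0" "b2 > 0" "c > 0"
    and balance: "(b1 + b2) * r = b2 * q2 - b1 * q1"
    and response1: "2 * (b1 + c) * q1 = max 0 (a - b1 * r)"
    and response2: "2 * (b2 + c) * q2 = max 0 (a + b2 * r)"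
  shows "a - b1 * r \<ge> 0"
proof (rule ccontr)
  assume "\<not> a - b1 * r \<ge> 0"
  then have lt: "a < b1 * r" by linarith
  then have "q1 = 0" using response1 assms(2,4) by simp
  have "b1 * r > 0" using lt assms(1) by linarith
  then have "r > 0" using assms(2) by (simp add: zero_less_mult_iff)
  then have "2 * (b2 + c) * q2 = a + b2 * r"
    using response2 assms(1,3) by simp
  then have "2 * (b2 + c) * ((b1 + b2) * r) = b2 * (a + b2 * r)"
    using balance \<open>q1 = 0\<close> by (metis diff_zero mult.assoc mult.left_commute mult_zero_right)
  also have "\<dots> < b2 * ((b1 + b2) * r)" using lt assms(3) by (simp add: algebra_simps)
  finally have "2 * (b2 + c) * ((b1 + b2) * r) < b2 * ((b1 + b2) * r)" .
  moreover have "(b1 + b2) * r > 0" using \<open>r > 0\<close> assms(2,3) by simp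
  ultimately have "2 * (b2 + c) < b2" by (simp add: mult_less_cancel_right)
  then show False using assms(3,4) by simp
qed

definition flow_denominator :: "real \<Rightarrow> real \<Rightarrow> real \<Rightarrow> real" where
  "flow_denominator b1 b2 c =
     (b1 + b2) * (b1 * b2 + 2 * c^2) + c * (b1^2 + b2^2 + 4 * b1 * b2)"

lemma flow_denominator_commute: "flow_denominator b1 b2 c = flow_denominator b2 b1 c"
  unfolding flow_denominator_def by (simp add: algebra_simps)

lemma flow_denominator_pos:
  assumes "b1 > 0" "b2 > 0" "c > 0"
  shows "flow_denominator b1 b2 c > 0"
  unfolding flow_denominator_def using assms by (simp add: add_pos_pos)

lemma interior_balance_iff:
  assumes "b1 > 0" "b2 > 0" "c > 0"
    and "2 * (b1 + c) * q1 = a - b1 * r" "2 * (b2 + c) * q2 = a + b2 * r"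
  shows "(b1 + b2) * r = b2 * q2 - b1 * q1 \<longleftrightarrow> r * flow_denominator b1 b2 c = a * c * (b2 - b1)"
proof -
  have "2 * (b1 + c) * (b2 + c) * ((b1 + b2) * r - (b2 * q2 - b1 * q1))
      = 2 * (b1 + c) * (b2 + c) * (b1 + b2) * r
        - b2 * (b1 + c) * (2 * (b2 + c) * q2) + b1 * (b2 + c) * (2 * (b1 + c) * q1)"
    by (simp add: algebra_simps)
  also have "\<dots> = r * flow_denominator b1 b2 c - a * c * (b2 - b1)"
    unfolding assms(4,5) flow_denominator_def by (simp add: algebra_simps power2_eq_square)
  finally have "2 * (b1 + c) * (b2 + c) * ((b1 + b2) * r - (b2 * q2 - b1 * q1))
      = r * flow_denominator b1 b2 c - a * c * (b2 - b1)" .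
  moreover have "2 * (b1 + c) * (b2 + c) \<noteq> 0" using assms(1-3) by simp
  ultimately show ?thesis by (metis eq_iff_diff_eq_0 mult_eq_0_iff)
qed

lemma interior_margin_pos:
  assumes "a > 0" "b1 > 0" "b2 > 0" "c > 0"
    and r: "r * flow_denominator b1 b2 c = a * c * (b2 - b1)"
  shows "a - b1 * r > 0"
proof -
  have "(a - b1 * r) * flow_denominator b1 b2 c
      = a * flow_denominator b1 b2 c - b1 * (r * flow_denominator b1 b2 c)"
    by (simp add: algebra_simps)
  also have "\<dots> = a * ((b1 + b2) * (b1 * b2 + 2 * c^2) + c * (2 * b1^2 + b2^2 + 3 * b1 * b2))"
    unfolding r by (simp add: flow_denominator_def algebra_simps power2_eq_square)
  finally have "(a - b1 * r) * flow_denominator b1 b2 c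
      = a * ((b1 + b2) * (b1 * b2 + 2 * c^2) + c * (2 * b1^2 + b2^2 + 3 * b1 * b2))" .
  moreover have "a * ((b1 + b2) * (b1 * b2 + 2 * c^2) + c * (2 * b1^2 + b2^2 + 3 * b1 * b2)) > 0"
    using assms(1-4) by (simp add: add_pos_pos)
  ultimately have "(a - b1 * r) * flow_denominator b1 b2 c > 0" by simp
  then show ?thesis
    using flow_denominator_pos[OF assms(2-4)] by (simp add: zero_less_mult_iff)
qed

lemma GNE_interior:
  assumes "a > 0" "b1 > 0" "b2 > 0" "c > 0" and "is_GNE a b1 c a b2 c q1 q2 r"
  shows "2 * (b1 + c) * q1 = a - b1 * r" "2 * (b2 + c) * q2 = a + b2 * r"
    and "r * flow_denominator b1 b2 c = a * c * (b2 - b1)"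
proof -
  have eqs: "2 * (b1 + c) * q1 = max 0 (a - b1 * r)"
      "2 * (b2 + c) * q2 = max 0 (a + b2 * r)" "(b1 + b2) * r = b2 * q2 - b1 * q1"
    using assms(5) is_GNE_iff[OF assms(2-4)] by simp_all
  \<comment> \<open>Node 2 is node 1 with the nodes exchanged and the flow negated.\<close>
  have "a - b1 * r \<ge> 0" using no_shutdown[OF assms(1-4) eqs(3,1,2)] .
  moreover have "a - b2 * (- r) \<ge> 0"
    by (rule no_shutdown[OF assms(1,3,2,4)]) (use eqs in \<open>simp_all add: algebra_simps\<close>)
  ultimately show foc: "2 * (b1 + c) * q1 = a - b1 * r" "2 * (b2 + c) * q2 = a + b2 * r"
    using eqs by simp_all
  show "r * flow_denominator b1 b2 c = a * c * (b2 - b1)"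
    using interior_balance_iff[OF assms(2-4) foc] eqs(3) by simp
qed

lemma interior_solution_is_GNE:
  assumes "a > 0" "b1 > 0" "b2 > 0" "c > 0"
    and r: "r * flow_denominator b1 b2 c = a * c * (b2 - b1)"
  shows "is_GNE a b1 c a b2 c ((a - b1 * r) / (2 * (b1 + c))) ((a + b2 * r) / (2 * (b2 + c))) r"
proof -
  define q1 where "q1 = (a - b1 * r) / (2 * (b1 + c))"
  define q2 where "q2 = (a + b2 * r) / (2 * (b2 + c))"
  have foc: "2 * (b1 + c) * q1 = a - b1 * r" "2 * (b2 + c) * q2 = a + b2 * r"
    using assms(2-4) unfolding q1_def q2_def by simp_all
  have margins: "a - b1 * r > 0" "a - b2 * (- r) > 0"
    using interior_margin_pos[OF assms(1-4) r]
      interior_margin_pos[OF assms(1,3,2,4), of "- r"] r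
    by (simp_all add: flow_denominator_commute algebra_simps)
  have "(b1 + b2) * r = b2 * q2 - b1 * q1"
    using interior_balance_iff[OF assms(2-4) foc] r by simp
  then have "is_GNE a b1 c a b2 c q1 q2 r"
    using is_GNE_iff[OF assms(2-4)] foc margins assms(2-4)
    unfolding q1_def q2_def by simp
  then show ?thesis unfolding q1_def q2_def .
qed

theorem mainTheorem4:
  fixes a c b1 b2 :: real
  assumes "a > 0" and "c > 0" and "b1 > 0" and "b2 > 0"
    and "1 < b1 / b2" and "b1 / b2 \<le> 3"
  defines "rs \<equiv> a * c * (b2 - b1) /
      ((b1 + b2) * (b1 * b2 + 2 * c^2) + c * (b1^2 + b2^2 + 4 * b1 * b2))"
  defines "q1s \<equiv> (a - b1 * rs) / (2 * (b1 + c))"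
  defines "q2s \<equiv> (a + b2 * rs) / (2 * (b2 + c))"
  shows "is_GNE a b1 c a b2 c q1s q2s rs
    \<and> (\<forall>q1 q2 r. is_GNE a b1 c a b2 c q1 q2 r \<longrightarrow> q1 = q1s \<and> q2 = q2s \<and> r = rs)
    \<and> a - b1 * rs \<ge> 0 \<and> a + b2 * rs \<ge> 0
    \<and> rs = (b2 * q2s - b1 * q1s) / (b1 + b2)"
proof -
  let ?D = "flow_denominator b1 b2 c"
  have D: "?D > 0" using flow_denominator_pos assms(2-4) by simp
  have rs: "rs * ?D = a * c * (b2 - b1)"
    using D unfolding rs_def flow_denominator_def by simp
  have gne: "is_GNE a b1 c a b2 c q1s q2s rs"
    unfolding q1s_def q2s_def using interior_solution_is_GNE[OF assms(1,3,4,2) rs] .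
  have unique: "q1 = q1s \<and> q2 = q2s \<and> r = rs" if "is_GNE a b1 c a b2 c q1 q2 r" for q1 q2 r
  proof -
    note interior = GNE_interior[OF assms(1,3,4,2) that]
    have "r = rs" using interior(3) rs D by (metis mult_right_cancel less_irrefl)
    then show ?thesis
      using interior(1,2) assms(2-4) unfolding q1s_def q2s_def by (simp add: field_simps)
  qed
  have margins: "a - b1 * rs > 0" "a - b2 * (- rs) > 0"
    using interior_margin_pos[OF assms(1,3,4,2) rs]
      interior_margin_pos[OF assms(1,4,3,2), of "- rs"] rs
    by (simp_all add: flow_denominator_commute algebra_simps)
  have "(b1 + b2) * rs = b2 * q2s - b1 * q1s"
    using GNE_interior[OF assms(1,3,4,2) gne] interior_balance_iff[OF assms(3,4,2)] rs by blast
  then have "rs = (b2 * q2s - b1 * q1s) / (b1 + b2)"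
    using assms(3,4) by (simp add: eq_divide_eq mult.commute)
  moreover have "\<forall>q1 q2 r. is_GNE a b1 c a b2 c q1 q2 r \<longrightarrow> q1 = q1s \<and> q2 = q2s \<and> r = rs"
    using unique by blast
  moreover have "a - b1 * rs \<ge> 0" "a + b2 * rs \<ge> 0" using margins by simp_all
  ultimately show ?thesis using gne by blast
qed

end
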